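(* In the setting below, for every nonempty $A\subseteq[n]$: $\Pr_{\psi\sim\Psi}(E_1(\psi)\wedge E_2(\psi)\wedge\neg E_3(\psi))\le 2^{-6}$.
   Context: $[N]:=\{0,\dots,N-1\}$. Fix integers $n\ge1$ and real $0<\varepsilon<1$. Let $b:=2^{\lceil\log_2(9\cdot 2^{23}\varepsilon^{-2})\rceil}$ and $k:=\lceil\tfrac{15}{2}\ln b+16\rceil$. Hash families: for $d\ge1$, identify $[2^d]$ with $\mathrm{GF}(2^d)$ via binary representation. For $k'\ge1$, $N\le 2^d$, $c\le d$, $\mathcal H_{k'}([N],[2^c])$ is the uniform distribution over tuples $(a_0,\dots,a_{k'-1})\in\mathrm{GF}(2^d)^{k'}$, each giving $x\mapsto(\sum_ia_ix^i)\bmod 2^c$ on $[N]$; $\mathcal G_{k'}([N])$ is uniform over the same tuples giving $x\mapsto\mathrm{tz}(\sum_ia_ix^i)$, $\mathrm{tz}(y)$ = number of trailing zeros of the $d$-bit representation of $y$ ($\mathrm{tz}(0)=d$). Here $d$ is a fixed integer with $2^d\ge N$, $d\ge c$. $\Psi:=\mathcal G_2([n])\times\mathcal H_2([n],[2^5b^2])\times\mathcal H_k([2^5b^2],[b])$ with the uniform product distribution; $\psi=(f,g,h)$. For fixed nonempty $A\subseteq[n]$: $t(f):=\max_{a\in A}f(a)-\log_2b+9$; $s(f):=\max(0,t(f))$; $R(f):=\{a\in A: f(a)\ge s(f)\}$. Events: $E_1(\psi)$: $2^{-16}b\le 2^{-t(f)}|A|\le 2^{-1}b$; $E_2(\psi)$: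 $\big||R(f)|-2^{-s(f)}|A|\big|\le\frac{\varepsilon}{3}2^{-s(f)}|A|$; $E_3(\psi)$: $g(a)\ne g(a')$ for all distinct $a,a'\in R(f)$. *)

theory Defs
  imports "HOL-Probability.Probability"
begin

definition lb_of :: "real \<Rightarrow> nat" where
  "lb_of \<epsilon> = nat \<lceil>log 2 (9 * 2^23 / \<epsilon>\<^sup>2)\<rceil>"
definition b_of :: "real \<Rightarrow> nat" where
  "b_of \<epsilon> = 2 ^ lb_of \<epsilon>"
definition k_of :: "real \<Rightarrow> nat" where
  "k_of \<epsilon> = nat \<lceil>15 / 2 * ln (real (b_of \<epsilon>)) + 16\<rceil>"

text \<open>An identification of the set [2^d] with a field via binary representation:
  enc is a bijection onto [2^d] under which field addition is bitwise xor.\<close>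
definition gf_enc :: "nat \<Rightarrow> ('a::field \<Rightarrow> nat) \<Rightarrow> bool" where
  "gf_enc d enc \<longleftrightarrow> bij_betw enc UNIV {..<2^d} \<and> (\<forall>x y. enc (x + y) = xor (enc x) (enc y))"

definition tz :: "nat \<Rightarrow> nat \<Rightarrow> nat" where
  "tz d y = (if y = 0 then d else (LEAST i. odd (y div 2 ^ i)))"

definition seeds :: "nat \<Rightarrow> (nat \<Rightarrow> 'a) set" where
  "seeds k = PiE {..<k} (\<lambda>_. UNIV)"

definition poly_eval :: "('a::field \<Rightarrow> nat) \<Rightarrow> nat \<Rightarrow> (nat \<Rightarrow> 'a) \<Rightarrow> nat \<Rightarrow> 'a" where
  "poly_eval enc k a x = (\<Sum>i<k. a i * (inv enc x) ^ i)"

definition hashH :: "('a::field \<Rightarrow> nat) \<Rightarrow> nat \<Rightarrow> nat \<Rightarrow> (nat \<Rightarrow> 'a) \<Rightarrow> nat \<Rightarrow> nat" where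
  "hashH enc c k a x = enc (poly_eval enc k a x) mod 2 ^ c"

definition hashG :: "('a::field \<Rightarrow> nat) \<Rightarrow> nat \<Rightarrow> nat \<Rightarrow> (nat \<Rightarrow> 'a) \<Rightarrow> nat \<Rightarrow> nat" where
  "hashG enc d k a x = tz d (enc (poly_eval enc k a x))"

definition t_of :: "nat \<Rightarrow> nat set \<Rightarrow> (nat \<Rightarrow> nat) \<Rightarrow> real" where
  "t_of b A f = real (Max (f ` A)) - log 2 (real b) + 9"
definition s_of :: "nat \<Rightarrow> nat set \<Rightarrow> (nat \<Rightarrow> nat) \<Rightarrow> real" where
  "s_of b A f = max 0 (t_of b A f)"
definition R_of :: "nat \<Rightarrow> nat set \<Rightarrow> (nat \<Rightarrow> nat) \<Rightarrow> nat set" where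
  "R_of b A f = {a \<in> A. real (f a) \<ge> s_of b A f}"

definition E1 :: "nat \<Rightarrow> nat set \<Rightarrow> (nat \<Rightarrow> nat) \<Rightarrow> bool" where
  "E1 b A f \<longleftrightarrow> 2 powr (-16) * real b \<le> 2 powr (- t_of b A f) * real (card A)
     \<and> 2 powr (- t_of b A f) * real (card A) \<le> 2 powr (-1) * real b"
definition E2 :: "real \<Rightarrow> nat \<Rightarrow> nat set \<Rightarrow> (nat \<Rightarrow> nat) \<Rightarrow> bool" where
  "E2 \<epsilon> b A f \<longleftrightarrow> \<bar>real (card (R_of b A f)) - 2 powr (- s_of b A f) * real (card A)\<bar>
     \<le> \<epsilon> / 3 * 2 powr (- s_of b A f) * real (card A)"
definition E3 :: "nat \<Rightarrow> nat set \<Rightarrow> (nat \<Rightarrow> nat) \<Rightarrow> (nat \<Rightarrow> nat) \<Rightarrow> bool" where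
  "E3 b A f g \<longleftrightarrow> (\<forall>a\<in>R_of b A f. \<forall>a'\<in>R_of b A f. a \<noteq> a' \<longrightarrow> g a \<noteq> g a')"

end

theory Submission imports Defs begin

text \<open>On \<open>E\<^sub>1 \<and> E\<^sub>2\<close> the set \<open>R(f)\<close> has at most \<open>(1 + \<epsilon>/3) 2\<^sup>-\<^sup>s |A| \<le> 2b/3\<close> elements, and this
  depends on the seed of \<open>f\<close> only. The family of linear polynomials over \<open>GF(2\<^sup>d)\<close> is
  pairwise independent, and reducing mod \<open>2\<^sup>c\<close> maps exactly \<open>2\<^sup>d\<^sup>-\<^sup>c\<close> field elements to
  each residue, so two distinct points collide under \<open>g\<close> with probability \<open>2\<^sup>-\<^sup>c\<close>.
  With \<open>2\<^sup>c = 2\<^sup>5 b\<^sup>2\<close>, a union bound over the pairs of \<open>R(f)\<close> bounds the probability of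
  a collision by \<open>(4/9) b\<^sup>2 / (2\<^sup>5 b\<^sup>2) < 2\<^sup>-\<^sup>6\<close>, for every fixed seed of \<open>f\<close>.\<close>

lemma gf_enc_bij: "gf_enc d enc \<Longrightarrow> bij_betw enc UNIV {..<2^d}"
  unfolding gf_enc_def by blast

lemma gf_enc_finite_UNIV: "gf_enc d (enc :: 'a::field \<Rightarrow> nat) \<Longrightarrow> finite (UNIV :: 'a set)"
  using bij_betw_finite[OF gf_enc_bij] by simp

lemma gf_enc_card_UNIV: "gf_enc d (enc :: 'a::field \<Rightarrow> nat) \<Longrightarrow> CARD('a) = 2^d"
  using bij_betw_same_card[OF gf_enc_bij] by simp

lemma gf_enc_inj: "gf_enc d enc \<Longrightarrow> inj enc"
  using gf_enc_bij bij_betw_def by blast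

lemma gf_enc_less: "gf_enc d enc \<Longrightarrow> enc v < 2^d"
  using gf_enc_bij bij_betwE by blast

lemma gf_enc_inv_eq: "gf_enc d enc \<Longrightarrow> x < 2^d \<Longrightarrow> enc (inv enc x) = x"
  by (metis gf_enc_bij bij_betw_inv_into_right lessThan_iff)

lemma finite_seeds: "finite (UNIV :: 'a set) \<Longrightarrow> finite (seeds k :: (nat \<Rightarrow> 'a) set)"
  unfolding seeds_def by (intro finite_PiE) auto

lemma seeds_nonempty: "seeds k \<noteq> {}"
  unfolding seeds_def by (simp add: PiE_eq_empty_iff)

lemma card_seeds: "card (seeds k :: (nat \<Rightarrow> 'a) set) = CARD('a) ^ k"
  unfolding seeds_def by (simp add: card_PiE)

lemma poly_eval_2: "poly_eval enc 2 a x = a 0 + a 1 * inv enc x"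
  by (simp add: poly_eval_def numeral_2_eq_2)

lemma inj_on_linear_values:
  fixes X Y :: "'a::field"
  assumes "X \<noteq> Y"
  shows "inj_on (\<lambda>a. (a 0 + a 1 * X, a 0 + a 1 * Y)) (seeds 2)"
proof (rule inj_onI)
  fix a a' :: "nat \<Rightarrow> 'a"
  assume a: "a \<in> seeds 2" "a' \<in> seeds 2"
    and eq: "(a 0 + a 1 * X, a 0 + a 1 * Y) = (a' 0 + a' 1 * X, a' 0 + a' 1 * Y)"
  then have "a 1 * (X - Y) = a' 1 * (X - Y)"
    by (simp add: right_diff_distrib) (metis add_diff_cancel_left diff_diff_eq2)
  then have slope: "a 1 = a' 1" using assms by simp
  with eq have "a 0 = a' 0" by simp
  with slope have "a i = a' i" if "i \<in> {..<2}" for i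
    using that less_2_cases by auto
  with a show "a = a'" unfolding seeds_def by (rule PiE_ext)
qed

lemma card_enc_mod_fiber:
  fixes enc :: "'a::field \<Rightarrow> nat"
  assumes "gf_enc d enc" "c \<le> d"
  shows "card {v. enc v mod 2^c = r} \<le> 2^(d-c)"
proof -
  have "inj_on (\<lambda>v. enc v div 2^c) {v. enc v mod 2^c = r}"
  proof (rule inj_onI)
    fix x y assume "x \<in> {v. enc v mod 2^c = r}" "y \<in> {v. enc v mod 2^c = r}"
      and "enc x div 2^c = enc y div 2^c"
    then have "enc x div 2^c * 2^c + enc x mod 2^c = enc y div 2^c * 2^c + enc y mod 2^c"
      by simp
    then have "enc x = enc y" by (simp only: div_mult_mod_eq)
    then show "x = y" using gf_enc_inj[OF assms(1)] by (simp add: inj_eq)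
  qed
  moreover have "(\<lambda>v. enc v div 2^c) ` {v. enc v mod 2^c = r} \<subseteq> {..<2^(d-c)}"
  proof (rule image_subsetI)
    fix v
    have "enc v < 2^(d-c) * 2^c" using gf_enc_less[OF assms(1)] assms(2)
      by (simp flip: power_add)
    then show "enc v div 2^c \<in> {..<2^(d-c)}" by (simp add: less_mult_imp_div_less)
  qed
  ultimately have "card {v. enc v mod 2^c = r} \<le> card {..<(2::nat)^(d-c)}"
    by (rule card_inj_on_le) simp
  then show ?thesis by simp
qed

lemma card_enc_mod_collisions:
  fixes enc :: "'a::field \<Rightarrow> nat"
  assumes "gf_enc d enc" "c \<le> d"
  shows "card (SIGMA u:UNIV. {v. enc v mod 2^c = enc u mod 2^c}) \<le> 2^d * 2^(d-c)"
proof -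
  have fin: "finite (UNIV :: 'a set)" by (rule gf_enc_finite_UNIV[OF assms(1)])
  have "card (SIGMA u:UNIV. {v. enc v mod 2^c = enc u mod 2^c})
      = (\<Sum>u\<in>UNIV. card {v. enc v mod 2^c = enc u mod 2^c})"
    using fin by (intro card_SigmaI) (auto intro: finite_subset)
  also have "\<dots> \<le> (\<Sum>u\<in>(UNIV :: 'a set). 2^(d-c))"
    by (intro sum_mono card_enc_mod_fiber[OF assms])
  finally show ?thesis using gf_enc_card_UNIV[OF assms(1)] by simp
qed

lemma card_hashH_2_collision:
  fixes enc :: "'a::field \<Rightarrow> nat"
  assumes "gf_enc d enc" "c \<le> d" "x < 2^d" "y < 2^d" "x \<noteq> y"
  shows "card {a \<in> seeds 2. hashH enc c 2 a x = hashH enc c 2 a y} * 2^c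
    \<le> card (seeds 2 :: (nat \<Rightarrow> 'a) set)"
proof -
  let ?T = "{a \<in> seeds 2. hashH enc c 2 a x = hashH enc c 2 a y}"
  let ?U = "SIGMA u:UNIV. {v. enc v mod 2^c = enc u mod 2^c}"
  let ?\<phi> = "\<lambda>a. (a 0 + a 1 * inv enc x, a 0 + a 1 * inv enc y)"
  have "inv enc x \<noteq> inv enc y" using assms(3-5) gf_enc_inv_eq[OF assms(1)] by metis
  then have "inj_on ?\<phi> ?T" by (rule inj_on_subset[OF inj_on_linear_values]) blast
  moreover have "?\<phi> ` ?T \<subseteq> ?U" by (auto simp: hashH_def poly_eval_2)
  moreover have "finite ?U"
    using gf_enc_finite_UNIV[OF assms(1)] by (intro finite_SigmaI) (auto intro: finite_subset)
  ultimately have "card ?T \<le> 2^d * 2^(d-c)"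
    using card_inj_on_le card_enc_mod_collisions[OF assms(1,2)] le_trans by blast
  then have "card ?T * 2^c \<le> 2^d * 2^(d-c) * 2^c" by simp
  also have "\<dots> = card (seeds 2 :: (nat \<Rightarrow> 'a) set)"
    using assms(2) gf_enc_card_UNIV[OF assms(1)]
    by (simp add: card_seeds power2_eq_square mult.assoc flip: power_add)
  finally show ?thesis .
qed

lemma card_some_collision_le:
  assumes "finite R"
    and "\<And>x y. x \<in> R \<Longrightarrow> y \<in> R \<Longrightarrow> x \<noteq> y \<Longrightarrow> real (card {s \<in> S. h s x = h s y}) \<le> p"
    and "0 \<le> p"
  shows "real (card {s \<in> S. \<exists>x\<in>R. \<exists>y\<in>R. x \<noteq> y \<and> h s x = h s y}) \<le> real (card R)^2 * p"
proof -
  define I where "I = {q \<in> R \<times> R. fst q \<noteq> snd q}"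
  define B where "B q = {s \<in> S. h s (fst q) = h s (snd q)}" for q
  have "finite I" unfolding I_def using assms(1) by simp
  have "{s \<in> S. \<exists>x\<in>R. \<exists>y\<in>R. x \<noteq> y \<and> h s x = h s y} = (\<Union>q\<in>I. B q)"
    unfolding I_def B_def by force
  then have "real (card {s \<in> S. \<exists>x\<in>R. \<exists>y\<in>R. x \<noteq> y \<and> h s x = h s y}) \<le> (\<Sum>q\<in>I. real (card (B q)))"
    using card_UN_le[OF \<open>finite I\<close>, of B] by (simp flip: of_nat_sum)
  also have "\<dots> \<le> (\<Sum>q\<in>I. p)"
    by (rule sum_mono) (auto simp: I_def B_def intro: assms(2))
  also have "\<dots> \<le> real (card R)^2 * p"
  proof -
    have "card I \<le> card (R \<times> R)" unfolding I_def using assms(1) by (intro card_mono) auto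
    then have "real (card I) \<le> real (card R)^2"
      by (simp add: card_cartesian_product power2_eq_square flip: of_nat_mult)
    then show ?thesis using assms(3) by (simp add: mult_right_mono)
  qed
  finally show ?thesis .
qed

lemma card_hashH_2_some_collision:
  fixes enc :: "'a::field \<Rightarrow> nat"
  assumes "gf_enc d enc" "c \<le> d" "finite R" "R \<subseteq> {..<2^d}"
  shows "real (card {a \<in> seeds 2. \<exists>x\<in>R. \<exists>y\<in>R. x \<noteq> y \<and> hashH enc c 2 a x = hashH enc c 2 a y})
    \<le> real (card R)^2 * (real (card (seeds 2 :: (nat \<Rightarrow> 'a) set)) / 2^c)"
proof (rule card_some_collision_le[where h = "hashH enc c 2", OF assms(3)])
  show "0 \<le> real (card (seeds 2 :: (nat \<Rightarrow> 'a) set)) / 2^c" by simp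
next
  fix x y assume "x \<in> R" "y \<in> R" "x \<noteq> y"
  with assms(4) have "card {a \<in> seeds 2. hashH enc c 2 a x = hashH enc c 2 a y} * 2^c
      \<le> card (seeds 2 :: (nat \<Rightarrow> 'a) set)"
    by (intro card_hashH_2_collision[OF assms(1,2)]) auto
  then have "real (card {a \<in> seeds 2. hashH enc c 2 a x = hashH enc c 2 a y} * 2^c)
      \<le> real (card (seeds 2 :: (nat \<Rightarrow> 'a) set))"
    by (rule of_nat_mono)
  then show "real (card {a \<in> seeds 2. hashH enc c 2 a x = hashH enc c 2 a y})
      \<le> real (card (seeds 2 :: (nat \<Rightarrow> 'a) set)) / 2^c"
    by (simp add: le_divide_eq)
qed

lemma card_R_of_le:
  assumes "E1 b A f" "E2 \<epsilon> b A f" "0 \<le> \<epsilon>" "\<epsilon> \<le> 1"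
  shows "real (card (R_of b A f)) \<le> 2/3 * real b"
proof -
  let ?m = "2 powr (- s_of b A f) * real (card A)"
  have "?m \<le> 2 powr (- t_of b A f) * real (card A)"
    unfolding s_of_def by (intro mult_right_mono) auto
  also have "\<dots> \<le> real b / 2"
    using assms(1) unfolding E1_def by (simp add: powr_minus_divide)
  finally have m: "?m \<le> real b / 2" .
  have "real (card (R_of b A f)) \<le> (1 + \<epsilon>/3) * ?m"
    using abs_le_D1[OF assms(2)[unfolded E2_def]] by (simp add: algebra_simps)
  also have "\<dots> \<le> 4/3 * (real b / 2)"
    using m assms(3,4) by (intro mult_mono) auto
  finally show ?thesis by simp
qed

lemma prob_product_le:
  assumes "finite S1" "finite S2" "finite S3" "S1 \<noteq> {}" "S2 \<noteq> {}" "S3 \<noteq> {}"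
    and "\<And>a1. a1 \<in> S1 \<Longrightarrow> P a1 \<Longrightarrow> real (card {a2 \<in> S2. Q a1 a2}) \<le> p * real (card S2)"
    and "0 \<le> p"
  shows "measure_pmf.prob (pmf_of_set (S1 \<times> S2 \<times> S3)) {(a1, a2, a3). P a1 \<and> Q a1 a2} \<le> p"
proof -
  let ?S = "S1 \<times> S2 \<times> S3"
  have "?S \<inter> {(a1, a2, a3). P a1 \<and> Q a1 a2} = (SIGMA a1:{a1 \<in> S1. P a1}. {a2 \<in> S2. Q a1 a2} \<times> S3)"
    by auto
  then have "real (card (?S \<inter> {(a1, a2, a3). P a1 \<and> Q a1 a2}))
      = (\<Sum>a1\<in>{a1 \<in> S1. P a1}. real (card {a2 \<in> S2. Q a1 a2}) * real (card S3))"
    using assms(1-3) by (simp add: card_cartesian_product)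
  also have "\<dots> \<le> (\<Sum>a1\<in>{a1 \<in> S1. P a1}. p * real (card S2) * real (card S3))"
    using assms(7) by (intro sum_mono mult_right_mono) auto
  also have "\<dots> \<le> real (card S1) * (p * real (card S2) * real (card S3))"
    using assms(1,8) by (simp add: card_mono mult_right_mono)
  also have "\<dots> = p * real (card ?S)" by (simp add: card_cartesian_product)
  finally show ?thesis
    using assms(1-6) by (simp add: measure_pmf_of_set divide_le_eq card_gt_0_iff)
qed

lemma card_not_E3_le:
  fixes enc :: "'a::field \<Rightarrow> nat"
  assumes "gf_enc d enc" "c \<le> d" "32 * b^2 \<le> 2^c" "A \<subseteq> {..<2^d}"
    and "E1 b A f" "E2 \<epsilon> b A f" "0 \<le> \<epsilon>" "\<epsilon> \<le> 1"
  shows "real (card {a \<in> seeds 2. \<not> E3 b A f (hashH enc c 2 a)})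
    \<le> real (card (seeds 2 :: (nat \<Rightarrow> 'a) set)) / 72"
proof -
  let ?N = "real (card (seeds 2 :: (nat \<Rightarrow> 'a) set))"
  have R: "finite (R_of b A f)" "R_of b A f \<subseteq> {..<2^d}"
    using assms(4) by (auto simp: R_of_def intro: finite_subset)
  have "real (card {a \<in> seeds 2. \<not> E3 b A f (hashH enc c 2 a)}) \<le> real (card (R_of b A f))^2 * (?N / 2^c)"
    using card_hashH_2_some_collision[OF assms(1,2) R] by (simp add: E3_def)
  also have "\<dots> \<le> (2/3 * real b)^2 * (?N / 2^c)"
    using card_R_of_le[OF assms(5-8)] by (intro mult_right_mono power_mono) auto
  also have "\<dots> = ((2/3 * real b)^2 * 72 / 2^c) * (?N / 72)"
    by (simp add: field_simps)
  also have "\<dots> \<le> 1 * (?N / 72)"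
  proof (rule mult_right_mono)
    have "real (32 * b^2) \<le> real (2^c)" using assms(3) by (rule of_nat_mono)
    then show "(2/3 * real b)^2 * 72 / 2^c \<le> 1" by (simp add: power2_eq_square)
  qed simp
  finally show ?thesis by simp
qed

theorem lemma11:
  fixes n :: nat and \<epsilon> :: real and A :: "nat set"
    and enc1 :: "'a::field \<Rightarrow> nat" and enc2 :: "'b::field \<Rightarrow> nat" and enc3 :: "'c::field \<Rightarrow> nat"
    and d1 d2 d3 :: nat
  assumes "n \<ge> 1" and "0 < \<epsilon>" and "\<epsilon> < 1"
    and "A \<subseteq> {..<n}" and "A \<noteq> {}"
    and "gf_enc d1 enc1" and "n \<le> 2 ^ d1"
    and "gf_enc d2 enc2" and "n \<le> 2 ^ d2" and "5 + 2 * lb_of \<epsilon> \<le> d2"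
    and "gf_enc d3 enc3" and "2 ^ 5 * (b_of \<epsilon>)\<^sup>2 \<le> 2 ^ d3" and "lb_of \<epsilon> \<le> d3"
  shows "measure_pmf.prob (pmf_of_set (seeds 2 \<times> seeds 2 \<times> seeds (k_of \<epsilon>)))
     {(a1, a2, a3).
        let f = hashG enc1 d1 2 a1;
            g = hashH enc2 (5 + 2 * lb_of \<epsilon>) 2 a2;
            h = hashH enc3 (lb_of \<epsilon>) (k_of \<epsilon>) a3;
            b = b_of \<epsilon>
        in E1 b A f \<and> E2 \<epsilon> b A f \<and> \<not> E3 b A f g}
   \<le> 2 powr (-6)"
proof -
  define b where "b = b_of \<epsilon>"
  define c where "c = 5 + 2 * lb_of \<epsilon>"
  have "32 * b^2 \<le> 2^c"
    by (simp add: b_def b_of_def c_def power_add flip: power_mult)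
  moreover have "A \<subseteq> {..<2^d2}" using assms(4,9) by auto
  ultimately have "real (card {a2 \<in> seeds 2. \<not> E3 b A f (hashH enc2 c 2 a2)})
      \<le> 1/64 * real (card (seeds 2 :: (nat \<Rightarrow> 'b) set))" if "E1 b A f \<and> E2 \<epsilon> b A f" for f
    using card_not_E3_le[OF assms(8) assms(10)[folded c_def], of b A f \<epsilon>] that assms(2,3) by simp
  then have "measure_pmf.prob (pmf_of_set (seeds 2 \<times> seeds 2 \<times> (seeds (k_of \<epsilon>) :: (nat \<Rightarrow> 'c) set)))
     {(a1, a2, a3). (E1 b A (hashG enc1 d1 2 a1) \<and> E2 \<epsilon> b A (hashG enc1 d1 2 a1))
        \<and> \<not> E3 b A (hashG enc1 d1 2 a1) (hashH enc2 c 2 a2)} \<le> 1/64"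
    by (intro prob_product_le) (simp_all add: seeds_nonempty finite_seeds
        gf_enc_finite_UNIV[OF assms(6)] gf_enc_finite_UNIV[OF assms(8)] gf_enc_finite_UNIV[OF assms(11)])
  then show ?thesis
    by (simp add: b_def c_def Let_def powr_minus powr_realpow)
qed

end
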